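(* Let $Y(0),Y(1)$ be real potential outcomes and $X$ a random vector in $\mathbb{R}^{d_X}$ with support $\mathcal{X}=\mathcal{X}_0\cup\mathcal{X}_1$, $\mathcal{X}_0\cap\mathcal{X}_1=\emptyset$, with $D=1\{X\in\mathcal{X}_1\}$ and $Y=DY(1)+(1-D)Y(0)$. Fix $q\in[0,1]$. Suppose that for $d\in\{0,1\}$ the function $x\mapsto Q_{Y(d)|X}(q|x)$ is continuous on $\mathcal{X}$, and that for all $x_1,x_2\in\mathcal{X}$, $$Q_{Y(0)|X}(q|x_1)\leq Q_{Y(0)|X}(q|x_2)\iff Q_{Y(1)|X}(q|x_1)\leq Q_{Y(1)|X}(q|x_2).$$ Let $\mathcal{F}=\mathrm{cl}(\mathrm{int}(\mathcal{X}_1))\cap\mathrm{cl}(\mathrm{int}(\mathcal{X}_0))$. Then for each $d\in\{0,1\}$ there is a unique continuous function $g_{d,q}$ on $\mathcal{X}_d\cup\mathcal{F}$ with $g_{d,q}(x)=Q_{Y|X}(q|x)$ for all $x\in\mathcal{X}_d$. Moreover, if for some $d$ and some $x\in\mathcal{X}_d$ there exists $x^*\in\mathcal{F}$ with $Q_{Y|X}(q|x)=g_{d,q}(x^* )$, then $Q_{Y(1-d)|X}(q|x)=g_{1-d,q}(x^* )$ and $Q_{Y(d)|X}(q|x)=g_{d,q}(x^* )$.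
   Context: $Q_{Y(d)|X}(q|x)$ denotes the $q$-th conditional quantile of $Y(d)$ given $X=x$ (the continuous version); for $x\in\mathcal{X}_d$, $Q_{Y|X}(q|x)$ is understood as $Q_{Y(d)|X}(q|x)$. *)

theory Defs
  imports "HOL-Probability.Probability"
begin

definition support_of :: "'b::metric_space measure \<Rightarrow> 'b set" where
  "support_of N = {x. \<forall>r>0. emeasure N (ball x r) > 0}"

end

theory Submission
  imports Defs
begin

text \<open>Only three hypotheses matter: the support \<open>XX 0 \<union> XX 1\<close> is closed, so it contains
  the common boundary \<open>F\<close> of the two regions and \<open>Q d q\<close> itself is a continuous extension
  of \<open>Q d q\<close> restricted to \<open>XX d\<close>; the extension is unique because \<open>XX d \<union> F\<close> lies in the
  closure of \<open>XX d\<close>. Finally, comonotonicity of \<open>Q 0 q\<close> and \<open>Q 1 q\<close> means that they have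
  the same level sets, so a tie in one quantile function forces a tie in the other.\<close>

lemma closed_support_of:
  fixes N :: "'b::metric_space measure"
  assumes "sets N = sets borel"
  shows "closed (support_of N)"
  unfolding closed_def open_contains_ball
proof
  fix x assume "x \<in> - support_of N"
  then obtain r where "r > 0" and null: "emeasure N (ball x r) = 0"
    unfolding support_of_def by (auto simp: not_less)
  have "y \<notin> support_of N" if "y \<in> ball x r" for y
  proof -
    obtain s where "s > 0" and "ball y s \<subseteq> ball x r"
      using \<open>y \<in> ball x r\<close> by (meson open_ball openE)
    then have "emeasure N (ball y s) \<le> emeasure N (ball x r)"
      by (intro emeasure_mono) (simp_all add: assms)
    with null \<open>s > 0\<close> show ?thesis
      unfolding support_of_def by auto
  qed
  with \<open>r > 0\<close> show "\<exists>e>0. ball x e \<subseteq> - support_of N" by blast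
qed

lemma continuous_on_eq_on_dense_subset:
  fixes f g :: "'a::metric_space \<Rightarrow> 'b::t2_space"
  assumes "continuous_on T f" "continuous_on T g" "A \<subseteq> T" "T \<subseteq> closure A"
    and "\<And>x. x \<in> A \<Longrightarrow> f x = g x" "x \<in> T"
  shows "f x = g x"
proof -
  obtain a where a: "\<And>n. a n \<in> A" "a \<longlonglongrightarrow> x"
    using assms(4,6) closure_sequential by blast
  with assms(3) have aT: "\<And>n. a n \<in> T" by blast
  have "(f \<circ> a) \<longlonglongrightarrow> f x" "(g \<circ> a) \<longlonglongrightarrow> g x"
    using continuous_on_sequentially[of T f] continuous_on_sequentially[of T g]
      assms(1,2,6) aT a(2) by auto
  moreover have "f \<circ> a = g \<circ> a"
    using a(1) assms(5) by auto
  ultimately show ?thesis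
    using LIMSEQ_unique by metis
qed

lemma continuous_extension_eq:
  fixes f h :: "'a::metric_space \<Rightarrow> 'b::t2_space"
  assumes "continuous_on S f" "closed S" "A \<subseteq> S" "B \<subseteq> closure A"
    and "continuous_on (A \<union> B) h" "\<forall>x\<in>A. h x = f x" "x \<in> A \<union> B"
  shows "h x = f x"
proof (rule continuous_on_eq_on_dense_subset[OF assms(5) continuous_on_subset[OF assms(1)]])
  show "A \<union> B \<subseteq> S" "A \<union> B \<subseteq> closure A"
    using assms(2-4) closure_minimal closure_subset by blast+
qed (use assms(6,7) in auto)

lemma ex_unique_continuous_extension:
  fixes f :: "'a::metric_space \<Rightarrow> 'b::t2_space"
  assumes "continuous_on S f" "closed S" "A \<subseteq> S" "B \<subseteq> closure A"
  shows "\<exists>g. continuous_on (A \<union> B) g \<and> (\<forall>x\<in>A. g x = f x)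
           \<and> (\<forall>h. continuous_on (A \<union> B) h \<and> (\<forall>x\<in>A. h x = f x) \<longrightarrow> (\<forall>x\<in>A \<union> B. h x = g x))"
proof (intro exI conjI allI impI ballI)
  show "continuous_on (A \<union> B) f"
    using assms closure_minimal by (blast intro: continuous_on_subset)
qed (use continuous_extension_eq[OF assms] in auto)

lemma comonotone_eq_iff:
  fixes f :: "'a \<Rightarrow> 'b::order" and g :: "'a \<Rightarrow> 'c::order"
  assumes "\<forall>x\<in>S. \<forall>y\<in>S. f x \<le> f y \<longleftrightarrow> g x \<le> g y" "x \<in> S" "y \<in> S"
  shows "f x = f y \<longleftrightarrow> g x = g y"
  using assms by (simp add: order.eq_iff)

theorem theoremB1:
  fixes M :: "'a measure"
    and X :: "'a \<Rightarrow> real ^ 'n"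
    and Y :: "nat \<Rightarrow> 'a \<Rightarrow> real"
    and XX :: "nat \<Rightarrow> (real ^ 'n) set"
    and Q :: "nat \<Rightarrow> real \<Rightarrow> real ^ 'n \<Rightarrow> real"
    and q :: real
  assumes "prob_space M"
    and "X \<in> borel_measurable M"
    and "\<forall>d\<in>{0,1}. Y d \<in> borel_measurable M"
    and "support_of (distr M borel X) = XX 0 \<union> XX 1"
    and "XX 0 \<inter> XX 1 = {}"
    and "q \<in> {0..1}"
    and "\<forall>d\<in>{0::nat,1}. continuous_on (XX 0 \<union> XX 1) (Q d q)"
    and "\<forall>x1\<in>XX 0 \<union> XX 1. \<forall>x2\<in>XX 0 \<union> XX 1.
           (Q 0 q x1 \<le> Q 0 q x2 \<longleftrightarrow> Q 1 q x1 \<le> Q 1 q x2)"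
  shows "(\<forall>d\<in>{0::nat,1}. \<exists>g.
            continuous_on (XX d \<union> (closure (interior (XX 1)) \<inter> closure (interior (XX 0)))) g
          \<and> (\<forall>x\<in>XX d. g x = Q d q x)
          \<and> (\<forall>h. continuous_on (XX d \<union> (closure (interior (XX 1)) \<inter> closure (interior (XX 0)))) h
                 \<and> (\<forall>x\<in>XX d. h x = Q d q x)
                 \<longrightarrow> (\<forall>x\<in>XX d \<union> (closure (interior (XX 1)) \<inter> closure (interior (XX 0))). h x = g x)))
       \<and> (\<forall>g :: nat \<Rightarrow> real ^ 'n \<Rightarrow> real.
            (\<forall>d\<in>{0::nat,1}.
               continuous_on (XX d \<union> (closure (interior (XX 1)) \<inter> closure (interior (XX 0)))) (g d)
             \<and> (\<forall>x\<in>XX d. g d x = Q d q x))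
          \<longrightarrow> (\<forall>d\<in>{0::nat,1}. \<forall>x\<in>XX d.
                 \<forall>xs\<in>closure (interior (XX 1)) \<inter> closure (interior (XX 0)).
                   Q d q x = g d xs \<longrightarrow> Q (1 - d) q x = g (1 - d) xs \<and> Q d q x = g d xs))"
proof -
  define F where "F = closure (interior (XX 1)) \<inter> closure (interior (XX 0))"
  have F_closure: "F \<subseteq> closure (XX d)" if "d \<in> {0, 1}" for d
    using that closure_mono[OF interior_subset] unfolding F_def by blast
  have support_closed: "closed (XX 0 \<union> XX 1)"
    using closed_support_of[of "distr M borel X"] assms(4) by simp
  then have F_support: "F \<subseteq> XX 0 \<union> XX 1"
    using F_closure[of 0] closure_minimal[of "XX 0"] by blast
  have XX_subset_support: "XX d \<subseteq> XX 0 \<union> XX 1" if "d \<in> {0, 1}" for d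
    using that by auto
  have Q_cont: "continuous_on (XX 0 \<union> XX 1) (Q d q)" if "d \<in> {0, 1}" for d
    using assms(7) that by blast
  show ?thesis (is "?extension \<and> ?transfer")
  proof
    show ?extension
      unfolding F_def[symmetric]
      using ex_unique_continuous_extension[OF Q_cont support_closed XX_subset_support F_closure]
      by blast
    show ?transfer
      unfolding F_def[symmetric]
    proof (intro allI impI ballI)
      fix g :: "nat \<Rightarrow> real ^ 'n \<Rightarrow> real" and d x xs
      assume g: "\<forall>d\<in>{0, 1}. continuous_on (XX d \<union> F) (g d) \<and> (\<forall>x\<in>XX d. g d x = Q d q x)"
        and d: "d \<in> {0, 1}" and "x \<in> XX d" "xs \<in> F" and tie: "Q d q x = g d xs"
      have "g e xs = Q e q xs" if "e \<in> {0, 1}" for e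
        using continuous_extension_eq[OF Q_cont[OF that] support_closed
            XX_subset_support[OF that] F_closure[OF that]]
          g that \<open>xs \<in> F\<close> by blast
      moreover have "x \<in> XX 0 \<union> XX 1" "xs \<in> XX 0 \<union> XX 1"
        using d \<open>x \<in> XX d\<close> \<open>xs \<in> F\<close> F_support by auto
      then have "Q 0 q x = Q 0 q xs \<longleftrightarrow> Q 1 q x = Q 1 q xs"
        by (rule comonotone_eq_iff[OF assms(8)])
      ultimately show "Q (1 - d) q x = g (1 - d) xs \<and> Q d q x = g d xs"
        using d tie by auto
    qed
  qed
qed

end
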